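(* For $s,t\in\mathbb R$ let $V(s,t)\subset\mathbb R^5$ be the simplex with vertices $(s,1,\tfrac13,1,1)$, $(s,0,\tfrac13,1,1)$, $(s,2-3t,\tfrac13,0,1)$, $(2-3s,t,0,\tfrac13,0)$, $(0,t,1,\tfrac13,0)$, $(1,t,1,\tfrac13,0)$. If $s,t\in[\tfrac49,\tfrac59]$, then $V(s,t)\subset Q_5$, $d_i(V(s,t))=1$ for $i=1,\dots,5$, $\alpha(V(s,t))=\xi(V(s,t))=5=\xi_5$, every vertex of $Q_5$ lies on the boundary of $5V(s,t)$ (so $V(s,t)$ is a perfect simplex), and each of the six hyperplanes containing the $4$-dimensional faces of $V(s,t)$ cuts off from $Q_5$ (on the side not containing $V(s,t)$) a part of volume $\tfrac13$ (so $V(s,t)$ is equisecting).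
   Context: $Q_n=[0,1]^n$. For a convex body $\Omega$ and $\sigma>0$, $\sigma\Omega$ is the homothetic image with center at the center of gravity of $\Omega$ and ratio $\sigma$. $\xi(S)$ is the minimal $\sigma\ge1$ with $Q_n\subset\sigma S$; $\alpha(S)$ is the minimal $\sigma>0$ such that $Q_n$ lies in a translate of $\sigma S$; $\xi_n$ is the minimum of $\xi(S)$ over nondegenerate simplices $S\subset Q_n$. $d_i(S)$ is the maximal length of a segment in $S$ parallel to the $x_i$-axis. A simplex $S$ is perfect if $S\subset Q_n\subset\xi_nS$ and all vertices of $Q_n$ lie on the boundary of $\xi_nS$. A simplex $S\subset Q_n$ is equisecting if all hyperplanes containing its $(n-1)$-dimensional faces cut off from $Q_n$ (outward from $S$) parts of equal volume. *)

theory Defs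
  imports "HOL-Analysis.Analysis"
begin

definition unit_cube :: "(real^'n) set" where
  "unit_cube = {x. \<forall>i. 0 \<le> x$i \<and> x$i \<le> 1}"

definition cube_vertices :: "(real^'n) set" where
  "cube_vertices = {x. \<forall>i. x$i = 0 \<or> x$i = 1}"

definition center_of_gravity :: "(real^'n) set \<Rightarrow> real^'n" where
  "center_of_gravity \<Omega> = inverse (measure lebesgue \<Omega>) *\<^sub>R integral \<Omega> (\<lambda>x. x)"

definition homot :: "real \<Rightarrow> (real^'n) set \<Rightarrow> (real^'n) set" where
  "homot \<sigma> \<Omega> = (\<lambda>x. center_of_gravity \<Omega> + \<sigma> *\<^sub>R (x - center_of_gravity \<Omega>)) ` \<Omega>"

definition xi :: "(real^'n) set \<Rightarrow> real" where
  "xi S = Inf {\<sigma>. 1 \<le> \<sigma> \<and> unit_cube \<subseteq> homot \<sigma> S}"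

definition alpha :: "(real^'n) set \<Rightarrow> real" where
  "alpha S = Inf {\<sigma>. 0 < \<sigma> \<and> (\<exists>v. unit_cube \<subseteq> (\<lambda>x. v + x) ` homot \<sigma> S)}"

definition nondeg_simplex :: "(real^'n::finite) set \<Rightarrow> bool" where
  "nondeg_simplex S \<longleftrightarrow> (int CARD('n)) simplex S"

definition xi_min :: "'n::finite itself \<Rightarrow> real" where
  "xi_min _ = Inf {xi S | S :: (real^'n) set. nondeg_simplex S \<and> S \<subseteq> unit_cube}"

definition axial_diam :: "'n \<Rightarrow> (real^'n) set \<Rightarrow> real" where
  "axial_diam i S = Sup {norm (x - y) | x y. x \<in> S \<and> y \<in> S \<and> (\<forall>j. j \<noteq> i \<longrightarrow> x$j = y$j)}"

definition perfect_simplex :: "(real^'n::finite) set \<Rightarrow> bool" where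
  "perfect_simplex S \<longleftrightarrow> nondeg_simplex S \<and> S \<subseteq> unit_cube \<and>
     unit_cube \<subseteq> homot (xi_min TYPE('n)) S \<and>
     cube_vertices \<subseteq> frontier (homot (xi_min TYPE('n)) S)"

definition facet_cutoff :: "(real^'n) set \<Rightarrow> real^'n \<Rightarrow> real \<Rightarrow> bool" where
  "facet_cutoff C v c \<longleftrightarrow> (\<exists>a b. a \<noteq> 0 \<and> (\<forall>w\<in>C - {v}. a \<bullet> w = b) \<and> a \<bullet> v < b \<and>
      measure lebesgue (unit_cube \<inter> {x. b < a \<bullet> x}) = c)"

definition equisecting :: "(real^'n) set \<Rightarrow> bool" where
  "equisecting C \<longleftrightarrow> (\<exists>c. \<forall>v\<in>C. facet_cutoff C v c)"

definition Vverts :: "real \<Rightarrow> real \<Rightarrow> (real^5) set" where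
  "Vverts s t = {vector [s, 1, 1/3, 1, 1], vector [s, 0, 1/3, 1, 1],
                 vector [s, 2 - 3 * t, 1/3, 0, 1], vector [2 - 3 * s, t, 0, 1/3, 0],
                 vector [0, t, 1, 1/3, 0], vector [1, t, 1, 1/3, 0]}"

definition V :: "real \<Rightarrow> real \<Rightarrow> (real^5) set" where
  "V s t = convex hull (Vverts s t)"

end

theory Submission
  imports Defs
begin

text \<open>
  Everything about \<open>V(s,t)\<close> is read off its barycentric coordinates, which are explicit affine
  functions. The center of gravity of a simplex is the mean of its vertices, here the center of the
  cube, where each coordinate is \<open>1/6\<close>; so \<open>5 V(s,t)\<close> is the region where all coordinates are at
  least \<open>-2/3\<close>. For \<open>s, t \<in> [4/9, 5/9]\<close> this holds on the whole cube, with equality for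
  some coordinate at every cube vertex. No simplex inside \<open>[0,1]\<^sup>n\<close> covers the cube at a
  ratio below \<open>n\<close>, so the ratio 5 is optimal. Finally, every facet hyperplane of \<open>V(s,t)\<close> is a graph
  \<open>x\<^sub>k = g(x)\<close> over a coordinate hyperplane with \<open>0 \<le> g \<le> 1\<close> on the cube, and a point
  reflection of the cube shows that the part below the graph has the volume \<open>g\<close> takes at the
  center; for each facet the part beyond it has volume \<open>1/3\<close>.
\<close>

section \<open>Barycentric coordinates\<close>

definition barycentric_coords :: "'a::real_vector set \<Rightarrow> ('a \<Rightarrow> 'a \<Rightarrow> real) \<Rightarrow> bool" where
  "barycentric_coords C bc \<longleftrightarrow> (\<forall>x. sum (bc x) C = 1 \<and> (\<Sum>v\<in>C. bc x v *\<^sub>R v) = x)"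

lemma barycentric_coordsD:
  assumes "barycentric_coords C bc"
  shows "sum (bc x) C = 1" "(\<Sum>v\<in>C. bc x v *\<^sub>R v) = x"
  using assms by (simp_all add: barycentric_coords_def)

lemma barycentric_coords_unique:
  assumes "finite C" "\<not> affine_dependent C" "barycentric_coords C bc"
    and "sum u C = 1" "(\<Sum>v\<in>C. u v *\<^sub>R v) = x" "v \<in> C"
  shows "u v = bc x v"
proof -
  note bc = barycentric_coordsD[OF assms(3), of x]
  have "sum (\<lambda>v. u v - bc x v) C = 0" using assms(4) bc by (simp add: sum_subtractf)
  moreover have "(\<Sum>v\<in>C. (u v - bc x v) *\<^sub>R v) = 0"
    using assms(5) bc by (simp add: scaleR_diff_left sum_subtractf)
  ultimately show ?thesis
    using assms(2,6) affine_dependent_explicit_finite[OF assms(1)] by fastforce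
qed

lemma mem_convex_hull_iff_barycentric_coords:
  assumes "finite C" "\<not> affine_dependent C" "barycentric_coords C bc"
  shows "x \<in> convex hull C \<longleftrightarrow> (\<forall>v\<in>C. 0 \<le> bc x v)"
proof
  assume "x \<in> convex hull C"
  then obtain u where "\<forall>v\<in>C. 0 \<le> u v" "sum u C = 1" "(\<Sum>v\<in>C. u v *\<^sub>R v) = x"
    using convex_hull_finite[OF assms(1)] by blast
  then show "\<forall>v\<in>C. 0 \<le> bc x v" using barycentric_coords_unique[OF assms] by simp
next
  assume "\<forall>v\<in>C. 0 \<le> bc x v"
  then show "x \<in> convex hull C"
    using convex_hull_finite[OF assms(1)] barycentric_coordsD[OF assms(3)] by blast
qed

lemma barycentric_coords_vertex:
  assumes "finite C" "\<not> affine_dependent C" "barycentric_coords C bc" "v \<in> C" "w \<in> C"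
  shows "bc v w = (if w = v then 1 else 0)"
proof (rule barycentric_coords_unique[OF assms(1-3), symmetric])
  have "(\<Sum>w\<in>C. (if w = v then 1 else 0) *\<^sub>R w) = (\<Sum>w\<in>C. if w = v then w else 0)"
    by (rule sum.cong) auto
  then show "(\<Sum>w\<in>C. (if w = v then 1 else 0) *\<^sub>R w) = v"
    using assms(1,4) by simp
qed (use assms in auto)

lemma barycentric_coords_exist:
  fixes C :: "(real^'n) set"
  assumes "finite C" "affine hull C = UNIV"
  obtains e m where "barycentric_coords C (\<lambda>x v. e v + (\<Sum>i\<in>UNIV. x$i * m i v))"
proof -
  have "\<forall>x. \<exists>u. sum u C = 1 \<and> (\<Sum>v\<in>C. u v *\<^sub>R v) = x"
    using assms affine_hull_finite[OF assms(1)] by blast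
  then obtain U where U: "\<And>x. sum (U x) C = 1" "\<And>x. (\<Sum>v\<in>C. U x v *\<^sub>R v) = x" by metis
  define m where "m i v = U (axis i 1) v - U 0 v" for i v
  have sum_m: "sum (m i) C = 0" for i by (simp add: m_def sum_subtractf U)
  have comb_m: "(\<Sum>v\<in>C. m i v *\<^sub>R v) = axis i 1" for i
    by (simp add: m_def scaleR_diff_left sum_subtractf U)
  have "barycentric_coords C (\<lambda>x v. U 0 v + (\<Sum>i\<in>UNIV. x$i * m i v))"
    unfolding barycentric_coords_def
  proof
    fix x :: "real^'n"
    have "(\<Sum>v\<in>C. \<Sum>i\<in>UNIV. x$i * m i v) = (\<Sum>i\<in>UNIV. x$i * sum (m i) C)"
      by (simp add: sum.swap[of _ C] sum_distrib_left)
    then have "(\<Sum>v\<in>C. U 0 v + (\<Sum>i\<in>UNIV. x$i * m i v)) = 1"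
      by (simp add: sum.distrib U sum_m)
    moreover have "(\<Sum>v\<in>C. (U 0 v + (\<Sum>i\<in>UNIV. x$i * m i v)) *\<^sub>R v)
        = (\<Sum>v\<in>C. U 0 v *\<^sub>R v) + (\<Sum>i\<in>UNIV. x$i *\<^sub>R (\<Sum>v\<in>C. m i v *\<^sub>R v))"
      by (simp add: scaleR_add_left sum.distrib scaleR_sum_left scaleR_sum_right sum.swap[of _ C])
    moreover have "(\<Sum>i\<in>UNIV. x$i *\<^sub>R axis i (1::real)) = x"
      using basis_expansion[of x] by (simp add: scalar_mult_eq_scaleR)
    ultimately show "(\<Sum>v\<in>C. U 0 v + (\<Sum>i\<in>UNIV. x$i * m i v)) = 1 \<and>
        (\<Sum>v\<in>C. (U 0 v + (\<Sum>i\<in>UNIV. x$i * m i v)) *\<^sub>R v) = x"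
      by (simp add: U comb_m)
  qed
  then show thesis by (rule that)
qed

lemma barycentric_coords_columns:
  fixes C :: "(real^'n) set"
  assumes "barycentric_coords C (\<lambda>x v. e v + (\<Sum>i\<in>UNIV. x$i * m i v))"
  shows "sum (m i) C = 0" "(\<Sum>v\<in>C. m i v *\<^sub>R v) = axis i 1"
proof -
  have at_axis: "(\<Sum>j\<in>UNIV. axis i (1::real) $ j * m j v) = m i v" for v
    by (simp add: axis_def if_distrib[of "\<lambda>r. r * _"] cong: if_cong)
  note bc = barycentric_coordsD[OF assms]
  show "sum (m i) C = 0"
    using bc(1)[of "axis i 1"] bc(1)[of 0] by (simp add: at_axis sum.distrib)
  show "(\<Sum>v\<in>C. m i v *\<^sub>R v) = axis i 1"
    using bc(2)[of "axis i 1"] bc(2)[of 0] by (simp add: at_axis sum.distrib scaleR_add_left)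
qed

lemma nondeg_simplexE:
  fixes S :: "(real^'n) set"
  assumes "nondeg_simplex S"
  obtains C where "finite C" "\<not> affine_dependent C" "affine hull C = UNIV" "S = convex hull C"
proof -
  obtain C where C: "\<not> affine_dependent C" "int (card C) = int CARD('n) + 1" "S = convex hull C"
    using assms unfolding nondeg_simplex_def simplex_def by blast
  have "aff_dim C = int (card C) - 1" using C(1) affine_independent_iff_card by blast
  then have "aff_dim C = int CARD('n)" using C(2) by simp
  then have "affine hull C = UNIV" using aff_dim_eq_full[of C] by simp
  then show thesis using that C aff_independent_finite by blast
qed

section \<open>A simplex in the cube covers it only after scaling by the dimension\<close>

lemma normalized_combination_in_convex_hull:
  assumes "finite C" "\<And>v. v \<in> C \<Longrightarrow> 0 \<le> u v" "0 < sum u C"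
  shows "(\<Sum>v\<in>C. (u v / sum u C) *\<^sub>R v) \<in> convex hull C"
  unfolding convex_hull_finite[OF assms(1)]
  using assms
  by (intro CollectI exI[of _ "\<lambda>v. u v / sum u C"]) (simp add: sum_divide_distrib[symmetric])

lemma max_0_diff_max_0_uminus: "max (a::real) 0 - max (- a) 0 = a"
  by auto

text \<open>The positive and negative parts of \<open>m\<close> have the same mass \<open>P\<close>; normalized, they are two
  points of the simplex whose difference is the \<open>i\<close>-th unit vector divided by \<open>P\<close>.\<close>
lemma axis_combination_negative_part_ge_1:
  fixes C :: "(real^'n) set" and m :: "real^'n \<Rightarrow> real"
  assumes fin: "finite C" and inside: "convex hull C \<subseteq> unit_cube"
    and sum_m: "sum m C = 0" and comb_m: "(\<Sum>v\<in>C. m v *\<^sub>R v) = axis i 1"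
  shows "1 \<le> (\<Sum>v\<in>C. max (- m v) 0)"
proof -
  define P where "P = (\<Sum>v\<in>C. max (- m v) 0)"
  have "(\<Sum>v\<in>C. max (m v) 0) - P = sum m C"
    by (simp add: P_def max_0_diff_max_0_uminus flip: sum_subtractf)
  then have P_pos_part: "(\<Sum>v\<in>C. max (m v) 0) = P" using sum_m by simp
  have "P \<noteq> 0"
  proof
    assume "P = 0"
    then have "\<forall>v\<in>C. max (m v) 0 = 0 \<and> max (- m v) 0 = 0"
      using P_pos_part fin unfolding P_def by (simp add: sum_nonneg_eq_0_iff)
    then have "\<forall>v\<in>C. m v = 0" by (metis max_0_diff_max_0_uminus diff_self)
    then show False using comb_m by (simp add: axis_eq_0_iff)
  qed
  moreover have "0 \<le> P" unfolding P_def by (intro sum_nonneg) auto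
  ultimately have "0 < P" by simp
  define A where "A = (\<Sum>v\<in>C. (max (- m v) 0 / P) *\<^sub>R v)"
  define B where "B = (\<Sum>v\<in>C. (max (m v) 0 / P) *\<^sub>R v)"
  have "A \<in> unit_cube" "B \<in> unit_cube"
    using normalized_combination_in_convex_hull[OF fin, of "\<lambda>v. max (- m v) 0"]
      normalized_combination_in_convex_hull[OF fin, of "\<lambda>v. max (m v) 0"] \<open>0 < P\<close> inside
    by (auto simp: A_def B_def P_def P_pos_part)
  then have "(B - A) $ i \<le> 1"
    unfolding unit_cube_def by (smt (verit) mem_Collect_eq vector_minus_component)
  moreover have "B - A = (1 / P) *\<^sub>R (\<Sum>v\<in>C. m v *\<^sub>R v)"
  proof -
    have "B - A = (\<Sum>v\<in>C. ((max (m v) 0 - max (- m v) 0) / P) *\<^sub>R v)"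
      by (simp add: A_def B_def diff_divide_distrib scaleR_diff_left sum_subtractf)
    then show ?thesis by (simp add: max_0_diff_max_0_uminus scaleR_sum_right)
  qed
  ultimately show ?thesis using \<open>0 < P\<close> comb_m by (simp add: P_def)
qed

text \<open>Cover the cube vertex whose coordinates are 1 exactly where \<open>m i v < 0\<close>: nonnegativity of the
  barycentric coordinate of its preimage bounds the negative parts of the columns \<open>m i\<close> at row \<open>v\<close>.\<close>
theorem card_le_ratio_if_simplex_covers_cube:
  fixes C :: "(real^'n) set"
  assumes fin: "finite C" and indep: "\<not> affine_dependent C" and span: "affine hull C = UNIV"
    and inside: "convex hull C \<subseteq> unit_cube" and "0 < \<sigma>"
    and covers: "unit_cube \<subseteq> (\<lambda>x. w + \<sigma> *\<^sub>R x) ` (convex hull C)"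
  shows "real CARD('n) \<le> \<sigma>"
proof -
  obtain e m where coords: "barycentric_coords C (\<lambda>x v. e v + (\<Sum>i\<in>UNIV. x$i * m i v))"
    using barycentric_coords_exist[OF fin span] .
  note sum_m = barycentric_coords_columns(1)[OF coords]
    and comb_m = barycentric_coords_columns(2)[OF coords]
  define bc where "bc x v = e v + (\<Sum>i\<in>UNIV. x$i * m i v)" for x v
  define x0 where "x0 = - (1 / \<sigma>) *\<^sub>R w"
  have row_bound: "(\<Sum>i\<in>UNIV. max (- m i v) 0) \<le> \<sigma> * bc x0 v" if "v \<in> C" for v
  proof -
    define y :: "real^'n" where "y = (\<chi> i. if m i v < 0 then 1 else 0)"
    have "y \<in> unit_cube" by (simp add: y_def unit_cube_def)
    then obtain x where x: "x \<in> convex hull C" "y = w + \<sigma> *\<^sub>R x" using covers by auto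
    have "0 \<le> bc x v"
      using x(1) that mem_convex_hull_iff_barycentric_coords[OF fin indep coords]
      by (simp add: bc_def)
    also have "x = x0 + (1 / \<sigma>) *\<^sub>R y" using x(2) \<open>0 < \<sigma>\<close> by (simp add: x0_def field_simps)
    then have "bc x v = bc x0 v + (1 / \<sigma>) * (\<Sum>i\<in>UNIV. y$i * m i v)"
      by (simp add: bc_def algebra_simps sum.distrib sum_distrib_left)
    also have "(\<Sum>i\<in>UNIV. y$i * m i v) = - (\<Sum>i\<in>UNIV. max (- m i v) 0)"
      by (simp add: y_def flip: sum_negf, rule sum.cong) auto
    finally show ?thesis using \<open>0 < \<sigma>\<close> by (simp add: field_simps)
  qed
  have "real CARD('n) = (\<Sum>i\<in>(UNIV::'n set). 1)" by simp
  also have "\<dots> \<le> (\<Sum>i\<in>UNIV. \<Sum>v\<in>C. max (- m i v) 0)"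
    by (intro sum_mono axis_combination_negative_part_ge_1[OF fin inside sum_m comb_m])
  also have "\<dots> = (\<Sum>v\<in>C. \<Sum>i\<in>UNIV. max (- m i v) 0)" by (rule sum.swap)
  also have "\<dots> \<le> (\<Sum>v\<in>C. \<sigma> * bc x0 v)" by (intro sum_mono row_bound)
  also have "\<dots> = \<sigma>"
    using barycentric_coordsD(1)[OF coords] by (simp add: bc_def flip: sum_distrib_left)
  finally show ?thesis .
qed

section \<open>The center of gravity of a simplex is the mean of its vertices\<close>

lemma simplex_barycenter_in_interior:
  fixes C :: "(real^'n) set"
  assumes indep: "\<not> affine_dependent C" and span: "affine hull C = UNIV"
  shows "(1 / real (card C)) *\<^sub>R (\<Sum>v\<in>C. v) \<in> interior (convex hull C)"
proof -
  have "aff_dim C = int (card C) - 1" using indep affine_independent_iff_card by blast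
  moreover have "aff_dim C = int CARD('n)"
    using span by (metis aff_dim_UNIV aff_dim_affine_hull DIM_cart DIM_real mult_1_right)
  ultimately have card_C: "card C = CARD('n) + 1" by linarith
  then show ?thesis
    unfolding interior_convex_hull_explicit[OF indep] scaleR_sum_right
    by (auto intro!: exI[of _ "\<lambda>v. 1 / real (card C)"])
qed

lemma simplex_measure_pos:
  fixes C :: "(real^'n) set"
  assumes fin: "finite C" and indep: "\<not> affine_dependent C" and span: "affine hull C = UNIV"
  shows "0 < measure lebesgue (convex hull C)"
proof -
  have "\<not> negligible (convex hull C)"
    using simplex_barycenter_in_interior[OF indep span]
      negligible_convex_interior[of "convex hull C"] by auto
  moreover have "convex hull C \<in> lmeasurable"
    using fin by (simp add: lmeasurable_compact compact_convex_hull finite_imp_compact)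
  ultimately show ?thesis
    using negligible_iff_measure0 measure_nonneg[of lebesgue "convex hull C"]
    by (metis less_eq_real_def)
qed

lemma absolutely_integrable_id_compact:
  fixes S :: "(real^'n) set"
  assumes "compact S"
  shows "(\<lambda>x. x) absolutely_integrable_on S"
proof -
  obtain a where "S \<subseteq> cbox (- a) a"
    using assms compact_imp_bounded bounded_subset_cbox_symmetric by metis
  moreover have "(\<lambda>x. x) absolutely_integrable_on cbox (- a) a"
    by (intro absolutely_integrable_continuous continuous_on_id)
  ultimately show ?thesis using set_integrable_subset assms lmeasurable_compact by blast
qed

lemma integral_affine_map:
  fixes S :: "(real^'n) set"
  assumes "compact S" "linear L"
  shows "integral S (\<lambda>x. b + L x) = measure lebesgue S *\<^sub>R b + L (integral S (\<lambda>x. x))"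
proof -
  have lmS: "S \<in> lmeasurable" using assms(1) lmeasurable_compact by blast
  have int_id: "(\<lambda>x. x) integrable_on S"
    using absolutely_integrable_id_compact[OF assms(1)] set_lebesgue_integral_eq_integral(1)
    by blast
  have bl_L: "bounded_linear L" using assms(2) linear_conv_bounded_linear by blast
  have int_1: "(\<lambda>x. 1::real) integrable_on S" using lmS lmeasurable_iff_integrable_on by blast
  have "integral S (\<lambda>x. b + L x) = integral S (\<lambda>x. 1 *\<^sub>R b) + integral S L"
    using integrable_linear[OF int_id bl_L]
      integrable_linear[OF int_1 bounded_linear_scaleR_left, of b]
    by (simp only: scaleR_one) (intro integral_add, simp_all add: o_def)
  also have "\<dots> = measure lebesgue S *\<^sub>R b + L (integral S (\<lambda>x. x))"
    using integral_linear[OF int_1 bounded_linear_scaleR_left, of b] integral_linear[OF int_id bl_L]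
    by (simp add: lmeasure_integral[OF lmS] o_def)
  finally show ?thesis .
qed

text \<open>Preserving the volume of \<open>S\<close> forces \<open>\<bar>det L\<bar> = 1\<close>; then the change of variables
  \<open>x \<mapsto> b + L x\<close> in \<open>\<integral>\<^sub>S x dx\<close> gives the claim.\<close>
lemma center_of_gravity_fixed_by_affine_symmetry:
  fixes S :: "(real^'n::{finite,wellorder}) set"
  assumes "compact S" "0 < measure lebesgue S" "linear L" "(\<lambda>x. b + L x) ` S = S"
  shows "b + L (center_of_gravity S) = center_of_gravity S"
proof -
  define T where "T x = b + L x" for x
  have lmS: "S \<in> lmeasurable" using assms(1) lmeasurable_compact by blast
  have "T ` S = (+) b ` (L ` S)" by (simp add: T_def image_image)
  then have "measure lebesgue (T ` S) = \<bar>det (matrix L)\<bar> * measure lebesgue S"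
    using measure_translation[of b "L ` S"] measure_linear_image[OF assms(3) lmS] by simp
  then have det_L: "\<bar>det (matrix L)\<bar> = 1" using assms(2,4) by (simp add: T_def)
  then have "inj L" using det_nz_iff_inj[OF assms(3)] by auto
  then have inj_T: "inj_on T S" by (simp add: T_def inj_on_def inj_def)
  have deriv_T: "(T has_derivative L) (at x within S)" for x
    unfolding T_def[abs_def]
    using has_derivative_add[OF has_derivative_const linear_imp_has_derivative[OF assms(3)]] by simp
  define I where "I = integral S (\<lambda>x. x)"
  have "I = integral (T ` S) (\<lambda>x. x)" using assms(4) by (simp add: I_def T_def)
  also have "\<dots> = integral S (\<lambda>x. \<bar>det (matrix L)\<bar> *\<^sub>R T x)"
    using lmS absolutely_integrable_id_compact[OF assms(1)] assms(4)
    by (intro integral_change_of_variables[OF _ deriv_T inj_T]) (auto simp: T_def)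
  also have "\<dots> = measure lebesgue S *\<^sub>R b + L I"
    by (simp add: det_L T_def integral_affine_map[OF assms(1,3)] I_def)
  finally have L_I: "L I = I - measure lebesgue S *\<^sub>R b" by (simp add: algebra_simps)
  have "b + L (center_of_gravity S)
      = b + inverse (measure lebesgue S) *\<^sub>R (I - measure lebesgue S *\<^sub>R b)"
    unfolding center_of_gravity_def I_def[symmetric] by (simp add: linear_cmul[OF assms(3)] L_I)
  also have "\<dots> = center_of_gravity S"
    using assms(2) unfolding center_of_gravity_def I_def[symmetric]
    by (simp add: scaleR_diff_right)
  finally show ?thesis .
qed

lemma finite_cyclic_permutation:
  assumes "finite C"
  obtains \<pi> where "bij_betw \<pi> C C"
    "\<And>(g :: 'a \<Rightarrow> real) v w.
       (\<And>v. v \<in> C \<Longrightarrow> g (\<pi> v) = g v) \<Longrightarrow> v \<in> C \<Longrightarrow> w \<in> C \<Longrightarrow> g v = g w"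
proof -
  define N where "N = card C"
  obtain f where f: "bij_betw f {..<N} C"
    using ex_bij_betw_nat_finite[OF assms] by (auto simp: N_def atLeast0LessThan)
  define succ where "succ k = Suc k mod N" for k
  have "bij_betw succ {..<N} {..<N}"
  proof -
    have "inj_on succ {..<N}" by (auto simp: inj_on_def succ_def mod_if split: if_splits)
    moreover have "succ ` {..<N} \<subseteq> {..<N}" by (auto simp: succ_def)
    ultimately show ?thesis by (simp add: bij_betw_def endo_inj_surj)
  qed
  then have bij: "bij_betw (f \<circ> succ \<circ> inv_into {..<N} f) C C"
    by (meson bij_betw_inv_into bij_betw_trans f)
  show thesis
  proof (rule that[OF bij])
    fix g v w assume inv: "\<And>v. v \<in> C \<Longrightarrow> g ((f \<circ> succ \<circ> inv_into {..<N} f) v) = g v"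
    have g_f: "g (f k) = g (f 0)" if "k < N" for k
      using that
    proof (induction k)
      case (Suc k)
      then have "f k \<in> C" using f bij_betwE by fastforce
      then have "g (f (succ k)) = g (f k)"
        using inv[of "f k"] Suc.prems f by (simp add: bij_betw_def inv_into_f_f)
      then show ?case using Suc by (simp add: succ_def)
    qed simp
    have "g u = g (f 0)" if "u \<in> C" for u
      using that f g_f by (auto simp: bij_betw_def)
    then show "v \<in> C \<Longrightarrow> w \<in> C \<Longrightarrow> g v = g w" by simp
  qed
qed

lemma affine_map_extending_vertex_map:
  fixes C :: "(real^'n) set" and \<pi> :: "real^'n \<Rightarrow> real^'n"
  assumes fin: "finite C" and indep: "\<not> affine_dependent C" and span: "affine hull C = UNIV"
  obtains L b where "linear L" "\<And>v. v \<in> C \<Longrightarrow> b + L v = \<pi> v"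
proof -
  obtain e m where coords: "barycentric_coords C (\<lambda>x v. e v + (\<Sum>i\<in>UNIV. x$i * m i v))"
    using barycentric_coords_exist[OF fin span] .
  define W where "W i = (\<Sum>v\<in>C. m i v *\<^sub>R \<pi> v)" for i
  define L where "L x = (\<Sum>i\<in>UNIV. x$i *\<^sub>R W i)" for x
  define b where "b = (\<Sum>v\<in>C. e v *\<^sub>R \<pi> v)"
  have "linear L"
    by (rule linearI) (simp_all add: L_def scaleR_add_left sum.distrib scaleR_sum_right)
  moreover have "b + L v = \<pi> v" if "v \<in> C" for v
  proof -
    have "b + L v = (\<Sum>w\<in>C. (e w + (\<Sum>i\<in>UNIV. v$i * m i w)) *\<^sub>R \<pi> w)"
      by (simp add: b_def L_def W_def scaleR_add_left sum.distrib scaleR_sum_left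
          scaleR_sum_right sum.swap[of _ C])
    also have "\<dots> = (\<Sum>w\<in>C. if w = v then \<pi> w else 0)"
      by (rule sum.cong) (use that barycentric_coords_vertex[OF fin indep coords that] in auto)
    finally show ?thesis using that fin by simp
  qed
  ultimately show thesis by (rule that)
qed

lemma affine_map_barycentric_coords:
  assumes "linear L" "barycentric_coords C bc"
  shows "b + L x = (\<Sum>v\<in>C. bc x v *\<^sub>R (b + L v))"
proof -
  have "(\<Sum>v\<in>C. bc x v *\<^sub>R (b + L v))
      = (\<Sum>v\<in>C. bc x v) *\<^sub>R b + L (\<Sum>v\<in>C. bc x v *\<^sub>R v)"
    by (simp add: scaleR_add_right sum.distrib scaleR_sum_left linear_sum[OF assms(1)]
        linear_cmul[OF assms(1)] o_def)
  then show ?thesis using barycentric_coordsD[OF assms(2)] by simp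
qed

lemma barycentric_coords_permute:
  assumes fin: "finite C" and indep: "\<not> affine_dependent C" and bc: "barycentric_coords C bc"
    and \<pi>: "bij_betw \<pi> C C" and fixed: "(\<Sum>v\<in>C. bc x v *\<^sub>R \<pi> v) = x" and "v \<in> C"
  shows "bc x (\<pi> v) = bc x v"
proof -
  define \<rho> where "\<rho> = inv_into C \<pi>"
  have \<rho>: "bij_betw \<rho> C C" using \<pi> by (simp add: \<rho>_def bij_betw_inv_into)
  have "(\<Sum>w\<in>C. bc x (\<rho> w)) = 1"
    using sum.reindex_bij_betw[OF \<rho>, of "bc x"] barycentric_coordsD(1)[OF bc] by simp
  moreover have "(\<Sum>w\<in>C. bc x (\<rho> w) *\<^sub>R w) = x"
  proof -
    have "(\<Sum>w\<in>C. bc x (\<rho> w) *\<^sub>R w) = (\<Sum>w\<in>C. bc x (\<rho> w) *\<^sub>R \<pi> (\<rho> w))"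
      by (rule sum.cong) (use \<pi> in \<open>simp_all add: \<rho>_def bij_betw_def f_inv_into_f\<close>)
    also have "\<dots> = x"
      using sum.reindex_bij_betw[OF \<rho>, of "\<lambda>v. bc x v *\<^sub>R \<pi> v"] fixed by simp
    finally show ?thesis .
  qed
  moreover have "\<pi> v \<in> C" "\<rho> (\<pi> v) = v"
    using \<open>v \<in> C\<close> \<pi> by (auto simp: \<rho>_def bij_betw_def inv_into_f_f)
  ultimately show ?thesis
    using barycentric_coords_unique[OF fin indep bc, of "\<lambda>w. bc x (\<rho> w)" x "\<pi> v"] by simp
qed

text \<open>An affine map permuting the vertices cyclically preserves the simplex, so it fixes the
  center of gravity; hence the barycentric coordinates of the center of gravity are all equal.\<close>
theorem simplex_center_of_gravity:
  fixes C :: "(real^'n::{finite,wellorder}) set"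
  assumes fin: "finite C" and indep: "\<not> affine_dependent C" and span: "affine hull C = UNIV"
  shows "center_of_gravity (convex hull C) = (1 / real (card C)) *\<^sub>R (\<Sum>v\<in>C. v)"
proof -
  obtain e m where "barycentric_coords C (\<lambda>x v. e v + (\<Sum>i\<in>UNIV. x$i * m i v))"
    using barycentric_coords_exist[OF fin span] .
  then obtain bc where coords: "barycentric_coords C bc" by (rule that)
  obtain \<pi> where \<pi>: "bij_betw \<pi> C C" and invariant_const:
    "\<And>(g :: _ \<Rightarrow> real) v w.
       (\<And>v. v \<in> C \<Longrightarrow> g (\<pi> v) = g v) \<Longrightarrow> v \<in> C \<Longrightarrow> w \<in> C \<Longrightarrow> g v = g w"
    by (fact finite_cyclic_permutation[OF fin])
  obtain L b where L: "linear L" and vertex: "\<And>v. v \<in> C \<Longrightarrow> b + L v = \<pi> v"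
    by (fact affine_map_extending_vertex_map[OF fin indep span])
  define c where "c = center_of_gravity (convex hull C)"
  have "(\<lambda>x. b + L x) ` S = (+) b ` (L ` S)" for S by (simp add: image_image)
  then have "(\<lambda>x. b + L x) ` (convex hull C) = convex hull ((\<lambda>x. b + L x) ` C)"
    by (simp add: convex_hull_linear_image[OF L] convex_hull_translation)
  also have "(\<lambda>x. b + L x) ` C = C" using vertex \<pi> by (simp add: bij_betw_def)
  finally have "b + L c = c" unfolding c_def
    using fin simplex_measure_pos[OF fin indep span]
    by (intro center_of_gravity_fixed_by_affine_symmetry[OF _ _ L])
      (auto simp: compact_convex_hull finite_imp_compact)
  have "(\<Sum>v\<in>C. bc c v *\<^sub>R \<pi> v) = (\<Sum>v\<in>C. bc c v *\<^sub>R (b + L v))"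
    by (rule sum.cong) (simp_all add: vertex)
  also have "\<dots> = c"
    using affine_map_barycentric_coords[OF L coords, of b c] \<open>b + L c = c\<close> by simp
  finally have permuted: "bc c (\<pi> v) = bc c v" if "v \<in> C" for v
    by (rule barycentric_coords_permute[OF fin indep coords \<pi> _ that])
  have bc_c: "bc c v = 1 / real (card C)" if "v \<in> C" for v
  proof -
    have "bc c w = bc c v" if "w \<in> C" for w
      using invariant_const[of "bc c"] permuted that \<open>v \<in> C\<close> by metis
    then have "(\<Sum>w\<in>C. bc c w) = real (card C) * bc c v" by simp
    then show ?thesis
      using barycentric_coordsD(1)[OF coords, of c]
      by (cases "card C = 0") (simp_all add: field_simps)
  qed
  have "c = (\<Sum>v\<in>C. bc c v *\<^sub>R v)" using barycentric_coordsD(2)[OF coords] by simp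
  also have "\<dots> = (1 / real (card C)) *\<^sub>R (\<Sum>v\<in>C. v)" by (simp add: bc_c scaleR_sum_right)
  finally show ?thesis by (simp add: c_def)
qed

lemma unit_cube_eq_cbox: "unit_cube = cbox (0::real^'n) 1"
  by (auto simp: unit_cube_def mem_box_cart)

lemma measure_unit_cube: "measure lebesgue (unit_cube :: (real^'n) set) = 1"
proof -
  have "(0::real^'n) \<in> cbox 0 1" by (simp add: mem_box_cart)
  then have "cbox (0::real^'n) 1 \<noteq> {}" by blast
  then show ?thesis by (simp add: unit_cube_eq_cbox measure_completion content_cbox_cart)
qed

lemma mem_homot_iff:
  assumes "center_of_gravity S = c" "\<sigma> \<noteq> 0"
  shows "y \<in> homot \<sigma> S \<longleftrightarrow> c + (1 / \<sigma>) *\<^sub>R (y - c) \<in> S"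
proof
  assume "y \<in> homot \<sigma> S"
  then obtain x where "x \<in> S" "y = c + \<sigma> *\<^sub>R (x - c)" using assms(1) by (auto simp: homot_def)
  then show "c + (1 / \<sigma>) *\<^sub>R (y - c) \<in> S" using assms(2) by simp
next
  assume "c + (1 / \<sigma>) *\<^sub>R (y - c) \<in> S"
  moreover have "y = c + \<sigma> *\<^sub>R ((c + (1 / \<sigma>) *\<^sub>R (y - c)) - c)" using assms(2) by simp
  ultimately show "y \<in> homot \<sigma> S" using assms(1) unfolding homot_def by blast
qed

lemma translation_homot:
  "(\<lambda>x. v + x) ` homot \<sigma> S
     = (\<lambda>x. (v + center_of_gravity S - \<sigma> *\<^sub>R center_of_gravity S) + \<sigma> *\<^sub>R x) ` S"
  by (auto simp: homot_def image_image algebra_simps)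

lemma subset_homot_if_center_in_interior:
  fixes S :: "(real^'n) set"
  assumes "center_of_gravity S \<in> interior S" "bounded T"
  shows "\<exists>\<sigma>\<ge>1. T \<subseteq> homot \<sigma> S"
proof -
  define c where "c = center_of_gravity S"
  obtain r where r: "0 < r" "ball c r \<subseteq> S" using assms(1) mem_interior c_def by blast
  obtain D where D: "0 < D" "T \<subseteq> ball c D" using bounded_subset_ballD[OF assms(2)] by blast
  define \<sigma> where "\<sigma> = 1 + D / r"
  have "1 \<le> \<sigma>" using r D by (simp add: \<sigma>_def)
  moreover have "T \<subseteq> homot \<sigma> S"
  proof
    fix y assume "y \<in> T"
    then have "norm (y - c) < D" using D by (auto simp: dist_norm norm_minus_commute)
    have "norm ((1 / \<sigma>) *\<^sub>R (y - c)) = norm (y - c) / \<sigma>" using \<open>1 \<le> \<sigma>\<close> by simp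
    also have "\<dots> < D / \<sigma>"
      using \<open>norm (y - c) < D\<close> \<open>1 \<le> \<sigma>\<close> by (simp add: divide_strict_right_mono)
    also have "\<dots> \<le> r" using r D by (simp add: \<sigma>_def field_simps)
    finally have "norm ((1 / \<sigma>) *\<^sub>R (y - c)) < r" .
    then have "c + (1 / \<sigma>) *\<^sub>R (y - c) \<in> S" using r by (auto simp: dist_norm)
    then show "y \<in> homot \<sigma> S" using mem_homot_iff[OF c_def[symmetric]] \<open>1 \<le> \<sigma>\<close> by simp
  qed
  ultimately show ?thesis by blast
qed

lemma card_le_ratio_if_homot_covers_cube:
  fixes S :: "(real^'n) set"
  assumes "nondeg_simplex S" "S \<subseteq> unit_cube" "0 < \<sigma>"
    and "unit_cube \<subseteq> (\<lambda>x. v + x) ` homot \<sigma> S"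
  shows "real CARD('n) \<le> \<sigma>"
proof -
  obtain C where C: "finite C" "\<not> affine_dependent C" "affine hull C = UNIV" "S = convex hull C"
    using nondeg_simplexE[OF assms(1)] .
  show ?thesis
    using card_le_ratio_if_simplex_covers_cube[OF C(1-3) _ assms(3)] assms(2,4) C(4)
    by (simp add: translation_homot)
qed

lemma xi_ge_card:
  fixes S :: "(real^'n::{finite,wellorder}) set"
  assumes "nondeg_simplex S" "S \<subseteq> unit_cube"
  shows "real CARD('n) \<le> xi S"
  unfolding xi_def
proof (rule cInf_greatest)
  obtain C where C: "finite C" "\<not> affine_dependent C" "affine hull C = UNIV" "S = convex hull C"
    using nondeg_simplexE[OF assms(1)] .
  then have "center_of_gravity S \<in> interior S"
    using simplex_center_of_gravity[OF C(1-3)] simplex_barycenter_in_interior[OF C(2,3)] by simp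
  then show "{\<sigma>. 1 \<le> \<sigma> \<and> unit_cube \<subseteq> homot \<sigma> S} \<noteq> {}"
    using subset_homot_if_center_in_interior[of S unit_cube] by (auto simp: unit_cube_eq_cbox)
  fix \<sigma> assume "\<sigma> \<in> {\<sigma>. 1 \<le> \<sigma> \<and> unit_cube \<subseteq> homot \<sigma> S}"
  then show "real CARD('n) \<le> \<sigma>"
    using card_le_ratio_if_homot_covers_cube[OF assms, of \<sigma> 0] by simp
qed

lemma xi_alpha_xi_min_eq_card:
  fixes S :: "(real^'n::{finite,wellorder}) set"
  assumes S: "nondeg_simplex S" "S \<subseteq> unit_cube"
    and covers: "unit_cube \<subseteq> homot (real CARD('n)) S"
  shows "xi S = real CARD('n)" "alpha S = real CARD('n)" "xi_min TYPE('n) = real CARD('n)"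
proof -
  have "1 \<le> real CARD('n)" by (simp add: Suc_le_eq)
  show xi_S: "xi S = real CARD('n)"
    unfolding xi_def
  proof (rule cInf_eq_minimum)
    show "real CARD('n) \<in> {\<sigma>. 1 \<le> \<sigma> \<and> unit_cube \<subseteq> homot \<sigma> S}"
      using covers \<open>1 \<le> real CARD('n)\<close> by simp
  qed (use card_le_ratio_if_homot_covers_cube[OF S, of _ 0] in auto)
  show "alpha S = real CARD('n)"
    unfolding alpha_def
  proof (rule cInf_eq_minimum)
    show "real CARD('n) \<in> {\<sigma>. 0 < \<sigma> \<and> (\<exists>v. unit_cube \<subseteq> (\<lambda>x. v + x) ` homot \<sigma> S)}"
      using covers by (auto intro!: exI[of _ 0])
  qed (use card_le_ratio_if_homot_covers_cube[OF S] in auto)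
  show "xi_min TYPE('n) = real CARD('n)"
    unfolding xi_min_def
  proof (rule cInf_eq_minimum)
    show "real CARD('n)
        \<in> {xi T |T :: (real^('n::{finite,wellorder})) set. nondeg_simplex T \<and> T \<subseteq> unit_cube}"
      using xi_S S by force
  qed (use xi_ge_card in auto)
qed

lemma perfect_simplexI:
  fixes S :: "(real^'n::{finite,wellorder}) set"
  assumes "nondeg_simplex S" "S \<subseteq> unit_cube" "unit_cube \<subseteq> homot (real CARD('n)) S"
    and "cube_vertices \<subseteq> frontier (homot (real CARD('n)) S)"
  shows "perfect_simplex S"
  using assms xi_alpha_xi_min_eq_card(3)[OF assms(1-3)] by (simp add: perfect_simplex_def)

lemma not_in_interior_if_on_supporting_hyperplane:
  fixes a :: "real^'n"
  assumes "a \<noteq> 0" "S \<subseteq> {z. c \<le> a \<bullet> z}" "a \<bullet> y = c"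
  shows "y \<notin> interior S"
  using interior_mono[OF assms(2)] assms(1,3) by auto

lemma axial_diam_eq_1:
  fixes S :: "(real^'n) set"
  assumes "S \<subseteq> unit_cube" "a \<in> S" "b \<in> S" "b - a = axis i 1"
  shows "axial_diam i S = 1"
  unfolding axial_diam_def
proof (rule cSup_eq_maximum)
  have "\<forall>j. j \<noteq> i \<longrightarrow> b$j = a$j"
  proof (intro allI impI)
    fix j assume "j \<noteq> i"
    then have "(b - a)$j = 0" using assms(4) by (simp add: axis_def)
    then show "b$j = a$j" by simp
  qed
  then show "1 \<in> {norm (x - y) |x y. x \<in> S \<and> y \<in> S \<and> (\<forall>j. j \<noteq> i \<longrightarrow> x$j = y$j)}"
    using assms(2-4) by (intro CollectI exI[of _ b] exI[of _ a]) simp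
next
  fix z assume "z \<in> {norm (x - y) |x y. x \<in> S \<and> y \<in> S \<and> (\<forall>j. j \<noteq> i \<longrightarrow> x$j = y$j)}"
  then obtain x y where xy: "z = norm (x - y)" "x \<in> S" "y \<in> S" "\<forall>j. j \<noteq> i \<longrightarrow> x$j = y$j"
    by blast
  then have "x - y = (x$i - y$i) *\<^sub>R axis i 1" by (auto simp: vec_eq_iff axis_def)
  moreover have "0 \<le> x$i" "x$i \<le> 1" "0 \<le> y$i" "y$i \<le> 1"
    using xy(2,3) assms(1) by (auto simp: unit_cube_def)
  ultimately show "z \<le> 1" using xy(1) by simp
qed

section \<open>Cutting the cube by the graph of an affine function\<close>

lemma measure_cube_slab:
  fixes k :: "'n::finite"
  assumes "0 \<le> c" "c \<le> 1"
  shows "measure lebesgue {x\<in>unit_cube. x$k \<le> c} = c"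
proof -
  define b :: "real^'n" where "b = (\<chi> i. if i = k then c else 1)"
  have "x \<in> {x\<in>unit_cube. x$k \<le> c} \<longleftrightarrow> (\<forall>i. 0 \<le> x$i \<and> x$i \<le> b$i)" for x
  proof
    assume "x \<in> {x\<in>unit_cube. x$k \<le> c}"
    then show "\<forall>i. 0 \<le> x$i \<and> x$i \<le> b$i" by (auto simp: unit_cube_def b_def)
  next
    assume x: "\<forall>i. 0 \<le> x$i \<and> x$i \<le> b$i"
    have "x$i \<le> 1" for i
      using x[rule_format, of i] assms(2) by (simp add: b_def split: if_splits)
    moreover have "x$k \<le> c" using x[rule_format, of k] by (simp add: b_def)
    ultimately show "x \<in> {x\<in>unit_cube. x$k \<le> c}" using x by (simp add: unit_cube_def)
  qed
  then have "{x\<in>unit_cube. x$k \<le> c} = cbox 0 b" by (auto simp: mem_box_cart)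
  moreover have "0 \<in> cbox 0 b" using assms by (simp add: mem_box_cart b_def)
  then have "cbox 0 b \<noteq> {}" by blast
  ultimately show ?thesis
    using content_cbox_cart[of 0 b] by (simp add: b_def prod.delta measure_completion)
qed

lemma reflection_lmeasurable:
  fixes S :: "(real^'n::{finite,wellorder}) set"
  assumes "S \<in> lmeasurable"
  shows "(\<lambda>x. p - x) ` S \<in> lmeasurable"
    and "measure lebesgue ((\<lambda>x. p - x) ` S) = measure lebesgue S"
proof -
  have "orthogonal_transformation (\<lambda>x::real^('n::{finite,wellorder}). - x)"
    using orthogonal_transformation_neg[of "\<lambda>x. x"] orthogonal_transformation_id by blast
  note neg = measurable_orthogonal_image[OF this assms] measure_orthogonal_image[OF this assms]
  have "(\<lambda>x. p - x) ` S = (+) p ` ((\<lambda>x. - x) ` S)" by (auto simp: image_image)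
  then show "(\<lambda>x. p - x) ` S \<in> lmeasurable"
    and "measure lebesgue ((\<lambda>x. p - x) ` S) = measure lebesgue S"
    using neg measurable_translation[OF neg(1), of p] measure_translation[of p] by simp_all
qed

lemma inner_bounds_on_unit_cube:
  fixes w :: "real^'n"
  assumes "x \<in> unit_cube"
  shows "(\<Sum>i\<in>UNIV. min (w$i) 0) \<le> w \<bullet> x" "w \<bullet> x \<le> (\<Sum>i\<in>UNIV. max (w$i) 0)"
proof -
  have x: "0 \<le> x$i" "x$i \<le> 1" for i using assms by (auto simp: unit_cube_def)
  have "min (w$i) 0 \<le> w$i * x$i \<and> w$i * x$i \<le> max (w$i) 0" for i
    using x[of i] mult_left_le_one_le[of "w$i" "x$i"] mult_left_le_one_le[of "- w$i" "x$i"]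
      mult_nonpos_nonneg[of "w$i" "x$i"]
    by (cases "0 \<le> w$i") (auto simp: min_def max_def)
  then show "(\<Sum>i\<in>UNIV. min (w$i) 0) \<le> w \<bullet> x" "w \<bullet> x \<le> (\<Sum>i\<in>UNIV. max (w$i) 0)"
    unfolding inner_vec_def by (auto intro: sum_mono)
qed

lemma lmeasurable_cube_below_graph:
  fixes w :: "real^'n"
  shows "{x\<in>unit_cube. x$k \<le> r + w \<bullet> x} \<in> lmeasurable"
proof -
  have "closed {x. x$k \<le> r + w \<bullet> x}" by (intro closed_Collect_le continuous_intros)
  moreover have "{x\<in>unit_cube. x$k \<le> r + w \<bullet> x} = cbox 0 1 \<inter> {x. x$k \<le> r + w \<bullet> x}"
    by (auto simp: unit_cube_eq_cbox)
  ultimately show ?thesis by (simp add: compact_Int_closed lmeasurable_compact)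
qed

lemma measure_eq_if_measure_Diff_eq:
  assumes "A \<in> lmeasurable" "B \<in> lmeasurable"
    and "measure lebesgue (A - B) = measure lebesgue (B - A)"
  shows "measure lebesgue A = measure lebesgue B"
proof -
  have "measure lebesgue (A - (A \<inter> B)) = measure lebesgue A - measure lebesgue (A \<inter> B)"
    "measure lebesgue (B - (A \<inter> B)) = measure lebesgue B - measure lebesgue (A \<inter> B)"
    using assms(1,2) by (auto intro!: measurable_measure_Diff)
  moreover have "A - (A \<inter> B) = A - B" "B - (A \<inter> B) = B - A" by auto
  ultimately show ?thesis using assms(3) by simp
qed

lemma negligible_graph_over_coordinate:
  fixes w :: "real^'n"
  assumes "w $ k = 0"
  shows "negligible {y. y$k = r + w \<bullet> y}"
proof -
  have "(axis k 1 - w) $ k = 1" using assms by (simp add: axis_def)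
  then have "axis k 1 - w \<noteq> 0" by auto
  moreover have "{y. y$k = r + w \<bullet> y} = {y. (axis k 1 - w) \<bullet> y = r}"
    by (auto simp: inner_diff_left cart_eq_inner_axis inner_commute inner_diff_right)
  ultimately show ?thesis using negligible_hyperplane by metis
qed

context
  fixes k :: "'n::{finite,wellorder}" and w :: "real^('n::{finite,wellorder})" and r :: real
  assumes w_k: "w $ k = 0"
    and range: "\<And>x. x \<in> unit_cube \<Longrightarrow> 0 \<le> r + w \<bullet> x \<and> r + w \<bullet> x \<le> 1"
begin

lemma range_off_coordinate:
  assumes "\<And>i. i \<noteq> k \<Longrightarrow> 0 \<le> y$i \<and> y$i \<le> 1"
  shows "0 \<le> r + w \<bullet> y \<and> r + w \<bullet> y \<le> 1"
proof -
  define y' where "y' = (\<chi> i. if i = k then 0 else y$i)"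
  have "y' \<in> unit_cube" using assms by (simp add: y'_def unit_cube_def)
  moreover have "w \<bullet> y' = w \<bullet> y"
    unfolding inner_vec_def by (rule sum.cong) (auto simp: y'_def w_k)
  ultimately show ?thesis using range[of y'] by simp
qed

context
  fixes c :: real and p :: "real^('n::{finite,wellorder})"
    and A B :: "(real^('n::{finite,wellorder})) set"
  assumes c_def: "c = r + w \<bullet> (\<chi> i. 1/2)" and p_def: "p = (\<chi> i. if i = k then 2 * c else 1)"
    and A_def: "A = {x\<in>unit_cube. x$k \<le> r + w \<bullet> x}"
    and B_def: "B = {x\<in>unit_cube. x$k \<le> c}"
begin

lemma reflection_swaps_graph:
  shows "r + w \<bullet> (p - x) = 2 * c - (r + w \<bullet> x)" "(p - x) $ k = 2 * c - x $ k"
proof -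
  have "w \<bullet> p = (\<Sum>i\<in>UNIV. w$i)"
    unfolding inner_vec_def p_def by (rule sum.cong) (auto simp: w_k)
  moreover have "w \<bullet> (\<chi> i. 1/2) = (\<Sum>i\<in>UNIV. w$i) / 2"
    by (simp add: inner_vec_def sum_divide_distrib)
  ultimately show "r + w \<bullet> (p - x) = 2 * c - (r + w \<bullet> x)" "(p - x) $ k = 2 * c - x $ k"
    by (simp_all add: c_def p_def inner_diff_right)
qed

lemma reflection_in_unit_cube:
  assumes "x \<in> unit_cube" "min c (r + w \<bullet> x) \<le> x$k" "x$k \<le> max c (r + w \<bullet> x)"
  shows "p - x \<in> unit_cube"
proof -
  have off_k: "0 \<le> (p - x)$i \<and> (p - x)$i \<le> 1" if "i \<noteq> k" for i
    using assms(1) that by (auto simp: p_def unit_cube_def)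
  have "0 \<le> c \<and> c \<le> 1" using range[of "\<chi> i. 1/2"] by (simp add: c_def unit_cube_def)
  moreover have "0 \<le> r + w \<bullet> (p - x) \<and> r + w \<bullet> (p - x) \<le> 1"
    by (rule range_off_coordinate[OF off_k])
  ultimately have "0 \<le> (p - x)$k \<and> (p - x)$k \<le> 1"
    using reflection_swaps_graph[of x] assms(2,3) by linarith
  then show ?thesis
    using off_k unfolding unit_cube_def mem_Collect_eq by (intro allI) (case_tac "i = k", auto)
qed

lemma reflection_image_Diff_subset_graph:
  "(\<lambda>x. p - x) ` (A - B) - (B - A) \<subseteq> {y. y$k = r + w \<bullet> y}"
proof
  fix y assume y_in: "y \<in> (\<lambda>x. p - x) ` (A - B) - (B - A)"
  then obtain x where "x \<in> A - B" and y: "y = p - x" by blast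
  then have x: "x \<in> unit_cube" "x$k \<le> r + w \<bullet> x" "\<not> x$k \<le> c" by (auto simp: A_def B_def)
  have "y \<in> unit_cube" using reflection_in_unit_cube[OF x(1)] x(2,3) y by simp
  moreover have "y$k < c" "r + w \<bullet> y \<le> y$k"
    using reflection_swaps_graph[of x] x(2,3) unfolding y by linarith+
  ultimately show "y \<in> {y. y$k = r + w \<bullet> y}" using y_in by (simp add: A_def B_def)
qed

lemma Diff_reflection_image_subset_level:
  "(B - A) - (\<lambda>x. p - x) ` (A - B) \<subseteq> {y. y$k = c}"
proof
  fix y assume "y \<in> (B - A) - (\<lambda>x. p - x) ` (A - B)"
  then have y: "y \<in> unit_cube" "y$k \<le> c" "\<not> y$k \<le> r + w \<bullet> y"
    and not_image: "y \<notin> (\<lambda>x. p - x) ` (A - B)" by (auto simp: A_def B_def)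
  have "p - y \<in> unit_cube" using reflection_in_unit_cube[OF y(1)] y(2,3) by simp
  moreover have "(p - y)$k \<le> r + w \<bullet> (p - y)"
    using reflection_swaps_graph[of y] y(3) by linarith
  moreover have "p - y \<notin> A - B"
  proof
    assume "p - y \<in> A - B"
    then have "y \<in> (\<lambda>x. p - x) ` (A - B)" by (rule rev_image_eqI) simp
    with not_image show False ..
  qed
  ultimately have "(p - y)$k \<le> c" by (simp add: A_def B_def)
  then show "y \<in> {y. y$k = c}" using reflection_swaps_graph[of y] y(2) by simp
qed

end

text \<open>The reflection \<open>x \<mapsto> p - x\<close> maps the part of the cube between the graph and the
  level \<open>c\<close> on one side onto the part on the other side, up to null sets; so the cut has the
  volume of the slab below the level \<open>c\<close>.\<close>
lemma measure_cube_below_graph: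
  "measure lebesgue {x\<in>unit_cube. x$k \<le> r + w \<bullet> x} = r + w \<bullet> (\<chi> i. 1/2)"
proof -
  define c where "c = r + w \<bullet> (\<chi> i. 1/2)"
  define p :: "real^('n::{finite,wellorder})" where "p = (\<chi> i. if i = k then 2 * c else 1)"
  define A where "A = {x\<in>unit_cube. x$k \<le> r + w \<bullet> x}"
  define B where "B = {x\<in>unit_cube. x$k \<le> c}"
  have lm: "A \<in> lmeasurable" "B \<in> lmeasurable" "A - B \<in> lmeasurable"
    using lmeasurable_cube_below_graph[of k r w] lmeasurable_cube_below_graph[of k c 0]
    by (simp_all add: A_def B_def fmeasurable_Diff fmeasurableD)
  have "negligible ({y. y$k = r + w \<bullet> y} \<union> {y. y$k = c})"
    using negligible_graph_over_coordinate[OF w_k] negligible_graph_over_coordinate[of 0 k c]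
    by simp
  moreover have "(\<lambda>x. p - x) ` (A - B) - (B - A) \<union> ((B - A) - (\<lambda>x. p - x) ` (A - B))
      \<subseteq> {y. y$k = r + w \<bullet> y} \<union> {y. y$k = c}"
    using reflection_image_Diff_subset_graph[OF c_def p_def A_def B_def]
      Diff_reflection_image_subset_level[OF c_def p_def A_def B_def] by blast
  ultimately have
    "negligible ((\<lambda>x. p - x) ` (A - B) - (B - A) \<union> ((B - A) - (\<lambda>x. p - x) ` (A - B)))"
    by (rule negligible_subset)
  then have "measure lebesgue (B - A) = measure lebesgue ((\<lambda>x. p - x) ` (A - B))"
    by (intro measure_negligible_symdiff reflection_lmeasurable lm)
  also have "\<dots> = measure lebesgue (A - B)" using reflection_lmeasurable(2)[OF lm(3)] .
  finally have "measure lebesgue A = measure lebesgue B"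
    by (rule measure_eq_if_measure_Diff_eq[OF lm(1,2) sym])
  moreover have "0 \<le> c \<and> c \<le> 1" using range[of "\<chi> i. 1/2"] by (simp add: c_def unit_cube_def)
  ultimately show ?thesis using measure_cube_slab[of c k] by (simp add: A_def B_def flip: c_def)
qed

lemma measure_cube_strictly_below_graph:
  "measure lebesgue {x\<in>unit_cube. x$k < r + w \<bullet> x} = r + w \<bullet> (\<chi> i. 1/2)"
proof -
  have "negligible ({x\<in>unit_cube. x$k \<le> r + w \<bullet> x} - {x\<in>unit_cube. x$k < r + w \<bullet> x} \<union>
      ({x\<in>unit_cube. x$k < r + w \<bullet> x} - {x\<in>unit_cube. x$k \<le> r + w \<bullet> x}))"
    by (rule negligible_subset[OF negligible_graph_over_coordinate[OF w_k, of r]]) auto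
  then show ?thesis
    using measure_negligible_symdiff[OF lmeasurable_cube_below_graph[of k r w]]
      measure_cube_below_graph
    by simp
qed

lemma measure_cube_above_graph:
  "measure lebesgue {x\<in>unit_cube. r + w \<bullet> x < x$k} = 1 - (r + w \<bullet> (\<chi> i. 1/2))"
proof -
  have "{x\<in>unit_cube. r + w \<bullet> x < x$k} = unit_cube - {x\<in>unit_cube. x$k \<le> r + w \<bullet> x}" by auto
  then show ?thesis
    using measurable_measure_Diff[OF _ fmeasurableD[OF lmeasurable_cube_below_graph],
        of unit_cube k r w]
      measure_cube_below_graph measure_unit_cube
    by (simp add: unit_cube_eq_cbox)
qed

end

lemma measure_cube_cut_by_graph:
  fixes w :: "real^('n::{finite,wellorder})"
  assumes "w$k = 0" "0 \<le> r + (\<Sum>i\<in>UNIV. min (w$i) 0)" "r + (\<Sum>i\<in>UNIV. max (w$i) 0) \<le> 1"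
  shows "measure lebesgue {x\<in>unit_cube. x$k < r + w \<bullet> x} = r + w \<bullet> (\<chi> i. 1/2)"
    and "measure lebesgue {x\<in>unit_cube. r + w \<bullet> x < x$k} = 1 - (r + w \<bullet> (\<chi> i. 1/2))"
proof -
  have "0 \<le> r + w \<bullet> x \<and> r + w \<bullet> x \<le> 1" if "x \<in> unit_cube" for x
    using inner_bounds_on_unit_cube[OF that, of w] assms(2,3) by linarith
  then show "measure lebesgue {x\<in>unit_cube. x$k < r + w \<bullet> x} = r + w \<bullet> (\<chi> i. 1/2)"
    and "measure lebesgue {x\<in>unit_cube. r + w \<bullet> x < x$k} = 1 - (r + w \<bullet> (\<chi> i. 1/2))"
    using measure_cube_strictly_below_graph[OF assms(1)] measure_cube_above_graph[OF assms(1)]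
    by blast+
qed

lemma exhaust_5:
  fixes x :: 5
  shows "x = 1 \<or> x = 2 \<or> x = 3 \<or> x = 4 \<or> x = 5"
proof (induct x)
  case (of_int z)
  then have "z = 0 \<or> z = 1 \<or> z = 2 \<or> z = 3 \<or> z = 4" by fastforce
  then show ?case by auto
qed

lemma forall_5: "(\<forall>i::5. P i) \<longleftrightarrow> P 1 \<and> P 2 \<and> P 3 \<and> P 4 \<and> P 5"
  by (metis exhaust_5)

lemma UNIV_5: "UNIV = {1, 2, 3, 4, 5::5}"
  using exhaust_5 by auto

lemma sum_UNIV_5: "sum f (UNIV::5 set) = f 1 + f 2 + f 3 + f 4 + f 5"
  unfolding UNIV_5 by (simp add: ac_simps)

lemma vector_5_nth [simp]:
  "(vector [a, b, c, d, e] :: ('a::zero)^5) $ 1 = a"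
  "(vector [a, b, c, d, e] :: ('a::zero)^5) $ 2 = b"
  "(vector [a, b, c, d, e] :: ('a::zero)^5) $ 3 = c"
  "(vector [a, b, c, d, e] :: ('a::zero)^5) $ 4 = d"
  "(vector [a, b, c, d, e] :: ('a::zero)^5) $ 5 = e"
  unfolding vector_def by simp_all

lemma inner_5: "(a::real^5) \<bullet> x = a$1 * x$1 + a$2 * x$2 + a$3 * x$3 + a$4 * x$4 + a$5 * x$5"
  by (simp add: inner_vec_def sum_UNIV_5)

lemma axis_5:
  "axis (1::5) (1::real) = vector [1, 0, 0, 0, 0]" "axis (2::5) (1::real) = vector [0, 1, 0, 0, 0]"
  "axis (3::5) (1::real) = vector [0, 0, 1, 0, 0]" "axis (4::5) (1::real) = vector [0, 0, 0, 1, 0]"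
  "axis (5::5) (1::real) = vector [0, 0, 0, 0, 1]"
  by (simp_all add: vec_eq_iff forall_5 axis_def)

lemma measure_cube_cut_by_graph_5:
  fixes k :: 5
  assumes "vector [a, b, c, d, e] $ k = (0::real)"
    "0 \<le> r + min a 0 + min b 0 + min c 0 + min d 0 + min e 0"
    "r + max a 0 + max b 0 + max c 0 + max d 0 + max e 0 \<le> 1"
  shows "measure lebesgue {x\<in>unit_cube. x$k < r + vector [a, b, c, d, e] \<bullet> x}
           = r + (a + b + c + d + e) / 2"
    and "measure lebesgue {x\<in>unit_cube. r + vector [a, b, c, d, e] \<bullet> x < x$k}
           = 1 - (r + (a + b + c + d + e) / 2)"
proof -
  have "vector [a, b, c, d, e] \<bullet> (\<chi> i. 1/2 :: real^5) = (a + b + c + d + e) / 2"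
    by (simp add: inner_5)
  then show "measure lebesgue {x\<in>unit_cube. x$k < r + vector [a, b, c, d, e] \<bullet> x}
           = r + (a + b + c + d + e) / 2"
    and "measure lebesgue {x\<in>unit_cube. r + vector [a, b, c, d, e] \<bullet> x < x$k}
           = 1 - (r + (a + b + c + d + e) / 2)"
    using measure_cube_cut_by_graph[of "vector [a, b, c, d, e]" k r] assms
    by (simp_all add: sum_UNIV_5 add.assoc)
qed

section \<open>The simplex V(s,t) and its barycentric coordinates\<close>

definition Vvertex :: "real \<Rightarrow> real \<Rightarrow> nat \<Rightarrow> real^5" where
  "Vvertex s t k = (if k = 0 then vector [s, 1, 1/3, 1, 1] else
                   if k = 1 then vector [s, 0, 1/3, 1, 1] else
                   if k = 2 then vector [s, 2 - 3 * t, 1/3, 0, 1] else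
                   if k = 3 then vector [2 - 3 * s, t, 0, 1/3, 0] else
                   if k = 4 then vector [0, t, 1, 1/3, 0] else vector [1, t, 1, 1/3, 0])"

text \<open>The barycentric coordinate of \<open>x\<close> with respect to the vertex \<open>Vvertex s t j\<close> is
  \<open>Voffset s t j + Vnormal s t j \<bullet> x\<close>; the normals and offsets are the rows of the inverse of the
  matrix of homogeneous vertex coordinates.\<close>
definition Vnormal :: "real \<Rightarrow> real \<Rightarrow> nat \<Rightarrow> real^5" where
  "Vnormal s t j = (if j = 0 then vector [0, 1, 0, 2 - 3 * t, 3 * t - 4/3] else
                    if j = 1 then vector [0, -1, 0, 3 * t - 1, 5/3 - 3 * t] else
                    if j = 2 then vector [0, 0, 0, -1, 2/3] else
                    if j = 3 then vector [0, 0, -1, 0, -2/3] else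
                    if j = 4 then vector [-1, 0, 3 * s - 1, 0, 3 * s - 5/3] else
                                  vector [1, 0, 2 - 3 * s, 0, 4/3 - 3 * s])"

definition Voffset :: "real \<Rightarrow> real \<Rightarrow> nat \<Rightarrow> real" where
  "Voffset s t j = (if j = 0 then -2/3 else if j = 1 then 1/3 else if j = 2 then 1/3 else
                    if j = 3 then 1 else if j = 4 then 2 - 3 * s else 3 * s - 2)"

definition Vcoord :: "real \<Rightarrow> real \<Rightarrow> nat \<Rightarrow> real^5 \<Rightarrow> real" where
  "Vcoord s t j x = Voffset s t j + Vnormal s t j \<bullet> x"

lemma less_6_cases: "(k::nat) < 6 \<longleftrightarrow> k = 0 \<or> k = 1 \<or> k = 2 \<or> k = 3 \<or> k = 4 \<or> k = 5"
  by auto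

lemma sum_lessThan_6:
  "(\<Sum>k<(6::nat). f k) = f 0 + f 1 + f 2 + f 3 + f 4 + (f 5 :: 'a::comm_monoid_add)"
  by (simp add: eval_nat_numeral ac_simps)

lemma Vcoord_Vvertex:
  "j < 6 \<Longrightarrow> k < 6 \<Longrightarrow> Vcoord s t j (Vvertex s t k) = (if j = k then 1 else 0)"
  unfolding less_6_cases
  by (elim disjE) (simp_all add: Vcoord_def Vvertex_def Vnormal_def Voffset_def inner_5 field_simps)

lemma sum_Vcoord: "(\<Sum>k<6. Vcoord s t k x) = 1"
  by (simp add: sum_lessThan_6 Vcoord_def Vnormal_def Voffset_def inner_5) (simp add: field_simps)

lemma sum_Vcoord_scaleR_Vvertex: "(\<Sum>k<6. Vcoord s t k x *\<^sub>R Vvertex s t k) = x"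
  by (simp add: sum_lessThan_6 Vcoord_def Vnormal_def Voffset_def inner_5 Vvertex_def vec_eq_iff
      forall_5) (simp_all add: field_simps)

lemma Vverts_eq_image: "Vverts s t = Vvertex s t ` {..<6}"
proof -
  have "{..<6::nat} = {0, 1, 2, 3, 4, 5}" by auto
  then show ?thesis unfolding Vverts_def by (simp add: Vvertex_def) blast
qed

lemma inj_on_Vvertex: "inj_on (Vvertex s t) {..<6}"
proof (rule inj_onI)
  fix j k assume "j \<in> {..<6}" "k \<in> {..<6}" "Vvertex s t j = Vvertex s t k"
  then show "j = k"
    using Vcoord_Vvertex[of j j s t] Vcoord_Vvertex[of j k s t] by (auto split: if_splits)
qed

lemma finite_Vverts: "finite (Vverts s t)"
  by (simp add: Vverts_eq_image)

lemma card_Vverts: "card (Vverts s t) = 6"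
  by (simp add: Vverts_eq_image card_image[OF inj_on_Vvertex])

lemma sum_Vverts: "(\<Sum>v\<in>Vverts s t. f v) = (\<Sum>k<6. f (Vvertex s t k))"
  by (simp add: Vverts_eq_image sum.reindex[OF inj_on_Vvertex])

lemma barycentric_coords_Vverts:
  "barycentric_coords (Vverts s t) (\<lambda>x v. Vcoord s t (inv_into {..<6} (Vvertex s t) v) x)"
  by (simp add: barycentric_coords_def sum_Vverts inv_into_f_f[OF inj_on_Vvertex] sum_Vcoord
      sum_Vcoord_scaleR_Vvertex)

lemma affine_hull_Vverts: "affine hull (Vverts s t) = UNIV"
  using barycentric_coordsD[OF barycentric_coords_Vverts]
  unfolding affine_hull_finite[OF finite_Vverts] by blast

lemma affine_independent_Vverts: "\<not> affine_dependent (Vverts s t)"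
proof -
  have "aff_dim (Vverts s t) = 5"
    using aff_dim_affine_hull[of "Vverts s t"] by (simp add: affine_hull_Vverts)
  then show ?thesis by (simp add: affine_independent_iff_card finite_Vverts card_Vverts)
qed

lemma mem_V_iff: "x \<in> V s t \<longleftrightarrow> (\<forall>k<6. 0 \<le> Vcoord s t k x)"
  unfolding V_def mem_convex_hull_iff_barycentric_coords[OF finite_Vverts affine_independent_Vverts
      barycentric_coords_Vverts]
  by (auto simp: Vverts_eq_image inv_into_f_f[OF inj_on_Vvertex])

lemma nondeg_simplex_V: "nondeg_simplex (V s t)"
  unfolding nondeg_simplex_def simplex_def V_def
  using affine_independent_Vverts card_Vverts by (intro exI[of _ "Vverts s t"]) simp

lemma Vvertex_in_V: "k < 6 \<Longrightarrow> Vvertex s t k \<in> V s t"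
  unfolding V_def Vverts_eq_image by (rule hull_subset[THEN subsetD]) simp

lemma Vnormal_nonzero: "Vnormal s t j \<noteq> 0"
proof -
  have "Vnormal s t j $ 1 \<noteq> 0 \<or> Vnormal s t j $ 2 \<noteq> 0 \<or> Vnormal s t j $ 3 \<noteq> 0 \<or>
      Vnormal s t j $ 4 \<noteq> 0"
    by (simp add: Vnormal_def)
  then show ?thesis by auto
qed

lemma center_of_gravity_V: "center_of_gravity (V s t) = (\<chi> i. 1/2)"
proof -
  have "center_of_gravity (V s t) = (1 / real (card (Vverts s t))) *\<^sub>R (\<Sum>v\<in>Vverts s t. v)"
    unfolding V_def
    using simplex_center_of_gravity[OF finite_Vverts affine_independent_Vverts] affine_hull_Vverts
    by simp
  also have "\<dots> = (\<chi> i. 1/2)"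
    by (simp add: card_Vverts sum_Vverts sum_lessThan_6 Vvertex_def vec_eq_iff forall_5)
  finally show ?thesis .
qed

lemma homot_5_V: "homot 5 (V s t) = {y. \<forall>j<6. -2/3 \<le> Vcoord s t j y}"
proof -
  have "Vcoord s t j ((\<chi> i. 1/2) + (1/5) *\<^sub>R (y - (\<chi> i. 1/2))) = 2/15 + Vcoord s t j y / 5"
    if "j < 6" for j y
    using that unfolding less_6_cases
    by (elim disjE) (simp_all add: Vcoord_def Vnormal_def Voffset_def inner_5 field_simps)
  moreover have "0 \<le> 2/15 + c / 5 \<longleftrightarrow> -2/3 \<le> c" for c :: real by linarith
  ultimately show ?thesis
    by (auto simp: mem_homot_iff[OF center_of_gravity_V] mem_V_iff)
qed

locale V_parameters =
  fixes s t :: real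
  assumes s_ge: "4/9 \<le> s" and s_le: "s \<le> 5/9" and t_ge: "4/9 \<le> t" and t_le: "t \<le> 5/9"
begin

lemma V_subset_unit_cube: "V s t \<subseteq> unit_cube"
  unfolding V_def
proof (rule hull_minimal)
  show "Vverts s t \<subseteq> unit_cube"
    using s_ge s_le t_ge t_le by (auto simp: Vverts_def unit_cube_def forall_5)
  show "convex (unit_cube :: (real^5) set)" by (simp add: unit_cube_eq_cbox convex_box)
qed

lemma Vcoord_lower_bound:
  "j < 6 \<Longrightarrow> -2/3 \<le> Voffset s t j + (\<Sum>i\<in>UNIV. min (Vnormal s t j $ i) 0)"
  unfolding less_6_cases using s_ge s_le t_ge t_le
  by (elim disjE) (simp_all add: Voffset_def Vnormal_def sum_UNIV_5 min_def)

lemma unit_cube_subset_homot_5_V: "unit_cube \<subseteq> homot 5 (V s t)"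
proof
  fix y :: "real^5" assume "y \<in> unit_cube"
  then have "-2/3 \<le> Vcoord s t j y" if "j < 6" for j
    using inner_bounds_on_unit_cube(1)[of y "Vnormal s t j"] Vcoord_lower_bound[OF that]
    by (simp add: Vcoord_def)
  then show "y \<in> homot 5 (V s t)" by (simp add: homot_5_V)
qed

lemma cube_vertex_on_facet_of_homot_5_V:
  assumes "y \<in> cube_vertices"
  shows "\<exists>j<6. Vcoord s t j y = -2/3"
proof -
  have y: "y$i = 0 \<or> y$i = 1" for i using assms by (auto simp: cube_vertices_def)
  define j where "j = (if y$5 = 0 then (if y$4 = 1 then 2 else if y$2 = 0 then 0 else 1)
                       else (if y$3 = 1 then 3 else if y$1 = 1 then 4 else 5::nat))"
  have "j < 6" by (simp add: j_def)
  moreover have "Vcoord s t j y = -2/3"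
    using y[of 1] y[of 2] y[of 3] y[of 4] y[of 5]
    by (auto simp: j_def Vcoord_def Voffset_def Vnormal_def inner_5 algebra_simps)
  ultimately show ?thesis by blast
qed

lemma cube_vertices_subset_frontier_homot_5_V: "cube_vertices \<subseteq> frontier (homot 5 (V s t))"
proof
  fix y :: "real^5" assume y: "y \<in> cube_vertices"
  then have "y$i = 0 \<or> y$i = 1" for i by (simp add: cube_vertices_def)
  then have "0 \<le> y$i \<and> y$i \<le> 1" for i by (metis order.refl zero_le_one)
  then have "y \<in> unit_cube" by (simp add: unit_cube_def)
  then have "y \<in> homot 5 (V s t)" using unit_cube_subset_homot_5_V by blast
  moreover obtain j where "j < 6" "Vcoord s t j y = -2/3"
    using cube_vertex_on_facet_of_homot_5_V[OF y] by blast
  then have "y \<notin> interior (homot 5 (V s t))"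
    by (intro not_in_interior_if_on_supporting_hyperplane[OF Vnormal_nonzero[of s t j],
          of _ "-2/3 - Voffset s t j"])
      (auto simp: homot_5_V Vcoord_def algebra_simps)
  ultimately show "y \<in> frontier (homot 5 (V s t))"
    using closure_subset by (auto simp: frontier_def)
qed

lemma axial_witnesses_in_V:
  "vector [2 - 3 * s, t, 1, 1/3, 0] \<in> V s t" "vector [s, 2 - 3 * t, 1/3, 1, 1] \<in> V s t"
  "vector [s, t, 1/3, 1/3, 0] \<in> V s t" "vector [s, t, 1/3, 1/3, 1] \<in> V s t"
  unfolding mem_V_iff less_6_cases using s_ge s_le t_ge t_le
  by (auto simp: Vcoord_def Voffset_def Vnormal_def inner_5 field_simps)

lemma axial_diam_V: "axial_diam i (V s t) = 1"
proof -
  note diam = axial_diam_eq_1[OF V_subset_unit_cube]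
  note simps = Vvertex_def axis_5 vec_eq_iff forall_5
  have "axial_diam 1 (V s t) = 1"
    by (rule diam[OF Vvertex_in_V[of 4] Vvertex_in_V[of 5]]) (simp_all add: simps)
  moreover have "axial_diam 2 (V s t) = 1"
    by (rule diam[OF Vvertex_in_V[of 1] Vvertex_in_V[of 0]]) (simp_all add: simps)
  moreover have "axial_diam 3 (V s t) = 1"
    by (rule diam[OF Vvertex_in_V[of 3] axial_witnesses_in_V(1)]) (simp_all add: simps)
  moreover have "axial_diam 4 (V s t) = 1"
    by (rule diam[OF Vvertex_in_V[of 2] axial_witnesses_in_V(2)]) (simp_all add: simps)
  moreover have "axial_diam 5 (V s t) = 1"
    by (rule diam[OF axial_witnesses_in_V(3,4)]) (simp add: simps)
  ultimately show ?thesis using exhaust_5[of i] by auto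
qed

lemma parameter_signs:
  "3 * t - 2 \<le> 0" "4/3 - 3 * t \<le> 0" "3 * s - 5/3 \<le> 0" "3 * s - 2 \<le> 0"
  "0 \<le> 3 * t - 1" "0 \<le> 5/3 - 3 * t" "0 \<le> 3 * s - 1" "0 \<le> 3 * s - 4/3"
  using s_ge s_le t_ge t_le by linarith+

lemmas min_max_parameter_simps =
  parameter_signs(1-4)[THEN min_absorb1] parameter_signs(1-4)[THEN max_absorb2]
  parameter_signs(5-8)[THEN min_absorb2] parameter_signs(5-8)[THEN max_absorb1]

lemma measure_cut_off_by_facet_0:
  "measure lebesgue (unit_cube \<inter> {x. Voffset s t 0 < - Vnormal s t 0 \<bullet> x}) = 1/3"
proof -
  have "unit_cube \<inter> {x. Voffset s t 0 < - Vnormal s t 0 \<bullet> x}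
      = {x\<in>unit_cube. x$(2::5) < 2/3 + vector [0, 0, 0, 3 * t - 2, 4/3 - 3 * t] \<bullet> x}"
    by (auto simp: Voffset_def Vnormal_def inner_5 algebra_simps)
  then show ?thesis
    by (simp only:) (subst measure_cube_cut_by_graph_5(1),
        simp_all add: min_max_parameter_simps, (simp add: field_simps)?)
qed

lemma measure_cut_off_by_facet_1:
  "measure lebesgue (unit_cube \<inter> {x. Voffset s t 1 < - Vnormal s t 1 \<bullet> x}) = 1/3"
proof -
  have "unit_cube \<inter> {x. Voffset s t 1 < - Vnormal s t 1 \<bullet> x}
      = {x\<in>unit_cube. 1/3 + vector [0, 0, 0, 3 * t - 1, 5/3 - 3 * t] \<bullet> x < x$(2::5)}"
    by (auto simp: Voffset_def Vnormal_def inner_5 algebra_simps)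
  then show ?thesis
    by (simp only:) (subst measure_cube_cut_by_graph_5(2),
        simp_all add: min_max_parameter_simps, (simp add: field_simps)?)
qed

lemma measure_cut_off_by_facet_2:
  "measure lebesgue (unit_cube \<inter> {x. Voffset s t 2 < - Vnormal s t 2 \<bullet> x}) = 1/3"
proof -
  have "unit_cube \<inter> {x. Voffset s t 2 < - Vnormal s t 2 \<bullet> x}
      = {x\<in>unit_cube. 1/3 + vector [0, 0, 0, 0, 2/3] \<bullet> x < x$(4::5)}"
    by (auto simp: Voffset_def Vnormal_def inner_5 algebra_simps)
  then show ?thesis
    by (simp only:) (subst measure_cube_cut_by_graph_5(2),
        simp_all add: min_max_parameter_simps, (simp add: field_simps)?)
qed

lemma measure_cut_off_by_facet_3:
  "measure lebesgue (unit_cube \<inter> {x. Voffset s t 3 < - Vnormal s t 3 \<bullet> x}) = 1/3"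
proof -
  have "unit_cube \<inter> {x. Voffset s t 3 < - Vnormal s t 3 \<bullet> x}
      = {x\<in>unit_cube. 1 + vector [0, 0, 0, 0, -2/3] \<bullet> x < x$(3::5)}"
    by (auto simp: Voffset_def Vnormal_def inner_5 algebra_simps)
  then show ?thesis
    by (simp only:) (subst measure_cube_cut_by_graph_5(2),
        simp_all add: min_max_parameter_simps, (simp add: field_simps)?)
qed

lemma measure_cut_off_by_facet_4:
  "measure lebesgue (unit_cube \<inter> {x. Voffset s t 4 < - Vnormal s t 4 \<bullet> x}) = 1/3"
proof -
  have "unit_cube \<inter> {x. Voffset s t 4 < - Vnormal s t 4 \<bullet> x}
      = {x\<in>unit_cube. 2 - 3 * s + vector [0, 0, 3 * s - 1, 0, 3 * s - 5/3] \<bullet> x < x$(1::5)}"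
    by (auto simp: Voffset_def Vnormal_def inner_5 algebra_simps)
  then show ?thesis
    by (simp only:) (subst measure_cube_cut_by_graph_5(2),
        simp_all add: min_max_parameter_simps, (simp add: field_simps)?)
qed

lemma measure_cut_off_by_facet_5:
  "measure lebesgue (unit_cube \<inter> {x. Voffset s t 5 < - Vnormal s t 5 \<bullet> x}) = 1/3"
proof -
  have "unit_cube \<inter> {x. Voffset s t 5 < - Vnormal s t 5 \<bullet> x}
      = {x\<in>unit_cube. x$(1::5) < 2 - 3 * s + vector [0, 0, 3 * s - 2, 0, 3 * s - 4/3] \<bullet> x}"
    by (auto simp: Voffset_def Vnormal_def inner_5 algebra_simps)
  then show ?thesis
    by (simp only:) (subst measure_cube_cut_by_graph_5(1),
        simp_all add: min_max_parameter_simps, (simp add: field_simps)?)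
qed

lemma measure_cut_off_by_facet:
  "j < 6 \<Longrightarrow> measure lebesgue (unit_cube \<inter> {x. Voffset s t j < - Vnormal s t j \<bullet> x}) = 1/3"
  unfolding less_6_cases
  using measure_cut_off_by_facet_0 measure_cut_off_by_facet_1 measure_cut_off_by_facet_2
    measure_cut_off_by_facet_3 measure_cut_off_by_facet_4 measure_cut_off_by_facet_5
  by (elim disjE) simp_all

lemma facet_cutoff_Vverts:
  assumes "v \<in> Vverts s t"
  shows "facet_cutoff (Vverts s t) v (1/3)"
proof -
  obtain k where k: "k < 6" "v = Vvertex s t k" using assms by (auto simp: Vverts_eq_image)
  have "- Vnormal s t k \<bullet> w = Voffset s t k" if w: "w \<in> Vverts s t - {v}" for w
  proof -
    obtain l where "l < 6" "w = Vvertex s t l" using w by (auto simp: Vverts_eq_image)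
    moreover have "l \<noteq> k" using w k \<open>w = Vvertex s t l\<close> by auto
    ultimately show ?thesis using Vcoord_Vvertex[OF k(1), of l s t] by (simp add: Vcoord_def)
  qed
  moreover have "- Vnormal s t k \<bullet> v < Voffset s t k"
    using Vcoord_Vvertex[OF k(1) k(1), of s t] k(2) by (simp add: Vcoord_def)
  ultimately show ?thesis
    unfolding facet_cutoff_def using Vnormal_nonzero[of s t k] measure_cut_off_by_facet[OF k(1)]
    by (intro exI[of _ "- Vnormal s t k"] exI[of _ "Voffset s t k"]) auto
qed

end

theorem mainTheorem5:
  fixes s t :: real
  assumes "4/9 \<le> s" "s \<le> 5/9" "4/9 \<le> t" "t \<le> 5/9"
  shows "nondeg_simplex (V s t) \<and> card (Vverts s t) = 6 \<and>
         V s t \<subseteq> unit_cube \<and>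
         (\<forall>i::5. axial_diam i (V s t) = 1) \<and>
         alpha (V s t) = 5 \<and> xi (V s t) = 5 \<and> xi_min TYPE(5) = 5 \<and>
         cube_vertices \<subseteq> frontier (homot 5 (V s t)) \<and>
         perfect_simplex (V s t) \<and>
         (\<forall>v\<in>Vverts s t. facet_cutoff (Vverts s t) v (1/3)) \<and>
         equisecting (Vverts s t)"
proof -
  interpret V_parameters s t using assms by unfold_locales
  have covering: "unit_cube \<subseteq> homot (real CARD(5)) (V s t)"
    using unit_cube_subset_homot_5_V by simp
  note ratios = xi_alpha_xi_min_eq_card[OF nondeg_simplex_V V_subset_unit_cube covering]
  have "perfect_simplex (V s t)"
    using perfect_simplexI[OF nondeg_simplex_V V_subset_unit_cube covering]
      cube_vertices_subset_frontier_homot_5_V by simp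
  moreover have "equisecting (Vverts s t)"
    unfolding equisecting_def using facet_cutoff_Vverts by blast
  ultimately show ?thesis
    using nondeg_simplex_V card_Vverts V_subset_unit_cube axial_diam_V ratios
      cube_vertices_subset_frontier_homot_5_V facet_cutoff_Vverts by simp
qed

end
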